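(* Let $C\ge0$ and $a>0$ be real numbers, $g(\xi)=Ce^{-a|\xi|}$, and let $g_m$ be the $m$-fold normalized convolution of $g$ ($g_1=g$, $g_{m+1}=g_m*g$). Then for every integer $m\ge1$ and every $\xi\ne0$, $$g_m(\xi)=2\sqrt{aC}\left(\frac{C|\xi|}{2\pi}\right)^{m-1/2}\frac{K_{m-1/2}(a|\xi|)}{\Gamma(m)},$$ and consequently, for all $\xi\in\mathbb{R}$, $$g_m(\xi)\le C e^{-a|\xi|}\left(\frac{C}{\pi a}\right)^{m-1}\frac{\Gamma\!\left(\frac{1+a|\xi|}{2}+m-1\right)}{\Gamma(m)\,\Gamma\!\left(\frac{1+a|\xi|}{2}\right)} .$$
   Context: Convolution is normalized: $f*h(\xi)=\frac1{2\pi}\int_{\mathbb{R}}f(\eta)h(\xi-\eta)\,d\eta$. $K_\nu$ is the modified Bessel function of the second kind of order $\nu$. *)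

theory Defs
  imports "HOL-Analysis.Analysis"
begin

definition nconv :: "(real \<Rightarrow> real) \<Rightarrow> (real \<Rightarrow> real) \<Rightarrow> real \<Rightarrow> real" where
  "nconv f h xi = (1 / (2 * pi)) * (LINT eta|lborel. f eta * h (xi - eta))"

text \<open>m-fold normalized convolution: g_1 = g, g_(m+1) = g_m * g (g_0 is a dummy value, unused).\<close>
fun conv_pow :: "(real \<Rightarrow> real) \<Rightarrow> nat \<Rightarrow> real \<Rightarrow> real" where
  "conv_pow g 0 = g"
| "conv_pow g (Suc 0) = g"
| "conv_pow g (Suc (Suc n)) = nconv (conv_pow g (Suc n)) g"

text \<open>Modified Bessel function of the second kind, via the standard integral representation
  K_nu(x) = integral_0^infinity exp(-x cosh t) cosh(nu t) dt, for x > 0.\<close>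
definition besselK :: "real \<Rightarrow> real \<Rightarrow> real" where
  "besselK nu x = (LBINT t:{0..}. exp (- x * cosh t) * cosh (nu * t))"

end

theory Submission
  imports Defs "HOL-Probability.Distributions"
begin

(*
  The argument runs through the reverse Bessel polynomials theta_n (rbessel n), defined by
  theta_0 = 1, theta_1 = 1 + y, theta_(n+2) = (2n+3) theta_(n+1) + y^2 theta_n.

  1. Convolution side.  With Phi_n(x) = e^{-|x|} theta_n(|x|) / n!  one has
        integral Phi_n(u) e^{-|y-u|} du = Phi_(n+1)(y),
     proved by the fundamental theorem of calculus on (-oo,y) and (y,oo) with explicit
     antiderivatives built from Phi_(n+1) and its derivative dPhi_n.  Rescaling gives
     g_(n+1)(x) = C^(n+1) / (2 pi a)^n * Phi_n(a x).
  2. Bessel side.  K_(1/2)(x) = sqrt(pi/(2x)) e^{-x} (a Gaussian integral after substitution)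
     and K_(nu+1) = K_(nu-1) + (2 nu / x) K_nu (integrating a derivative), hence
        K_(n+1/2)(x) = sqrt(pi/(2x)) e^{-x} theta_n(x) / x^n.
  3. Comparing both closed forms gives the identity; the inequality follows from
     theta_n(y) <= 2^n ((1+y)/2)_n and the Gamma-function form of the Pochhammer symbol.
*)

fun rbessel :: "nat \<Rightarrow> real \<Rightarrow> real" where
  "rbessel 0 y = 1"
| "rbessel (Suc 0) y = 1 + y"
| "rbessel (Suc (Suc n)) y = (2 * real n + 3) * rbessel (Suc n) y + y\<^sup>2 * rbessel n y"

lemma rbessel_nonneg: "y \<ge> 0 \<Longrightarrow> rbessel n y \<ge> 0"
  by (induction n y rule: rbessel.induct) auto

(* The derivative identity theta_(n+1)' = theta_(n+1) - y theta_n, proved for two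
   consecutive indices at once since the recursion looks back two steps. *)
lemma rbessel_deriv:
  "(rbessel (Suc n) has_real_derivative rbessel (Suc n) y - y * rbessel n y) (at y)"
proof -
  have "(rbessel (Suc n) has_real_derivative rbessel (Suc n) y - y * rbessel n y) (at y) \<and>
        (rbessel (Suc (Suc n)) has_real_derivative rbessel (Suc (Suc n)) y - y * rbessel (Suc n) y) (at y)"
    for y
  proof (induction n arbitrary: y)
    case 0
    have "rbessel (Suc 0) = (\<lambda>y. 1 + y)" "rbessel 2 = (\<lambda>y. y\<^sup>2 + 3 * y + 3)"
      by (auto simp: algebra_simps numeral_2_eq_2)
    then show ?case
      by (auto intro!: derivative_eq_intros simp: numeral_2_eq_2 [symmetric] algebra_simps power2_eq_square)
  next
    case (Suc n)
    have rec: "rbessel (Suc (Suc (Suc n))) =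
        (\<lambda>y. (2 * real (Suc n) + 3) * rbessel (Suc (Suc n)) y + y\<^sup>2 * rbessel (Suc n) y)"
      by (rule ext) (simp only: rbessel.simps)
    have "(rbessel (Suc (Suc (Suc n))) has_real_derivative
          (2 * real (Suc n) + 3) * (rbessel (Suc (Suc n)) y - y * rbessel (Suc n) y)
          + (2 * y * rbessel (Suc n) y + y\<^sup>2 * (rbessel (Suc n) y - y * rbessel n y))) (at y)"
      unfolding rec using Suc.IH[of y]
      by (auto intro!: derivative_eq_intros simp del: rbessel.simps)
    then have "(rbessel (Suc (Suc (Suc n))) has_real_derivative
          rbessel (Suc (Suc (Suc n))) y - y * rbessel (Suc (Suc n)) y) (at y)"
      by (rule DERIV_cong) (simp add: algebra_simps power2_eq_square)
    then show ?case using Suc.IH by blast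
  qed
  then show ?thesis by blast
qed

lemma rbessel_ratio:
  assumes y: "y \<ge> 0"
  shows "y * rbessel n y \<le> rbessel (Suc n) y \<and> rbessel (Suc n) y \<le> (y + 2 * real n + 1) * rbessel n y"
proof (induction n)
  case 0
  then show ?case by simp
next
  case (Suc n)
  let ?r = "2 * real n + 3"
  have lo: "y * rbessel n y \<le> rbessel (Suc n) y" and up: "rbessel (Suc n) y \<le> (y + 2 * real n + 1) * rbessel n y"
    using Suc by auto
  have rec: "rbessel (Suc (Suc n)) y = ?r * rbessel (Suc n) y + y\<^sup>2 * rbessel n y" by simp
  have nn: "rbessel n y \<ge> 0" "rbessel (Suc n) y \<ge> 0" using rbessel_nonneg[OF y] by auto
  have "y\<^sup>2 * rbessel n y \<le> y * rbessel (Suc n) y"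
    using mult_left_mono[OF lo y] by (simp add: power2_eq_square mult_ac)
  then have upper: "rbessel (Suc (Suc n)) y \<le> (y + 2 * real (Suc n) + 1) * rbessel (Suc n) y"
    unfolding rec by (simp add: algebra_simps)
  have lower: "y * rbessel (Suc n) y \<le> rbessel (Suc (Suc n)) y"
  proof (cases "y \<le> ?r")
    case True
    then show ?thesis unfolding rec using nn by (simp add: mult_right_mono add_increasing2)
  next
    case False
    have "(y - ?r) * rbessel (Suc n) y \<le> (y - ?r) * ((y + 2 * real n + 1) * rbessel n y)"
      using False up by (intro mult_left_mono) auto
    also have "\<dots> = (y\<^sup>2 - 2 * y - ?r * (2 * real n + 1)) * rbessel n y"
      by (simp add: algebra_simps power2_eq_square)
    also have "\<dots> \<le> y\<^sup>2 * rbessel n y"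
    proof (rule mult_right_mono[OF _ nn(1)])
      have "?r * (2 * real n + 1) \<ge> 0" by simp
      then show "y\<^sup>2 - 2 * y - ?r * (2 * real n + 1) \<le> y\<^sup>2" using y by linarith
    qed
    finally show ?thesis unfolding rec by (simp add: algebra_simps)
  qed
  from lower upper show ?case ..
qed

lemma rbessel_le_pochhammer:
  assumes y: "y \<ge> 0"
  shows "rbessel n y \<le> 2 ^ n * pochhammer ((1 + y) / 2) n"
proof (induction n)
  case 0
  then show ?case by simp
next
  case (Suc n)
  have "rbessel (Suc n) y \<le> (y + 2 * real n + 1) * rbessel n y" using rbessel_ratio[OF y] by blast
  also have "\<dots> \<le> (y + 2 * real n + 1) * (2 ^ n * pochhammer ((1 + y) / 2) n)"
    using Suc y by (intro mult_left_mono) auto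
  also have "\<dots> = 2 ^ Suc n * pochhammer ((1 + y) / 2) (Suc n)"
    by (simp add: pochhammer_rec' field_simps)
  finally show ?case .
qed

(* A crude polynomial growth bound, used for the decay of Phi_n at infinity. *)
lemma rbessel_poly_bound:
  assumes y: "y \<ge> 0"
  shows "rbessel n y \<le> (2 * real n + 1) ^ n * (1 + y) ^ n"
proof (induction n)
  case 0
  then show ?case by simp
next
  case (Suc n)
  have "rbessel (Suc n) y \<le> (y + 2 * real n + 1) * rbessel n y" using rbessel_ratio[OF y] by blast
  also have "\<dots> \<le> ((2 * real (Suc n) + 1) * (1 + y)) * ((2 * real (Suc n) + 1) ^ n * (1 + y) ^ n)"
  proof (rule mult_mono)
    show "y + 2 * real n + 1 \<le> (2 * real (Suc n) + 1) * (1 + y)"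
      using y by (simp add: algebra_simps)
    have "(2 * real n + 1) ^ n \<le> (2 * real (Suc n) + 1) ^ n" by (intro power_mono) auto
    then show "rbessel n y \<le> (2 * real (Suc n) + 1) ^ n * (1 + y) ^ n"
      using Suc y by (meson mult_right_mono order.trans zero_le_power add_nonneg_nonneg zero_le_one)
  qed (use y rbessel_nonneg in auto)
  also have "\<dots> = (2 * real (Suc n) + 1) ^ Suc n * (1 + y) ^ Suc n"
    by (simp add: algebra_simps)
  finally show ?case .
qed

lemma DERIV_glue_at_0:
  fixes f g f' g' :: "real \<Rightarrow> real"
  assumes f: "\<And>x. (f has_real_derivative f' x) (at x)"
    and g: "\<And>x. (g has_real_derivative g' x) (at x)"
    and "f 0 = g 0" and "f' 0 = g' 0"
  shows "((\<lambda>x. if x \<ge> 0 then f x else g x) has_real_derivative (if x \<ge> 0 then f' x else g' x)) (at x)"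
proof -
  have cl: "closure {0::real..} \<inter> closure {..<0} = {0}" by auto
  have "((\<lambda>x. if x \<in> {0..} then f x else g x) has_vector_derivative
        (if x \<in> {0..} then f' x else g' x)) (at x within UNIV)"
    by (rule has_vector_derivative_If_within_closures[where T = "{..<0}"])
      (use assms in \<open>auto simp: cl has_real_derivative_iff_has_vector_derivative[symmetric]
         intro: has_field_derivative_at_within\<close>)
  then show ?thesis by (simp add: has_real_derivative_iff_has_vector_derivative)
qed

lemma DERIV_even_extension:
  fixes f f' :: "real \<Rightarrow> real"
  assumes f: "\<And>x. (f has_real_derivative f' x) (at x)" and "f' 0 = 0"
  shows "((\<lambda>x. f \<bar>x\<bar>) has_real_derivative sgn x * f' \<bar>x\<bar>) (at x)"
proof -
  have reflect: "((\<lambda>x. f (- x)) has_real_derivative - f' (- x)) (at x)" for x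
    using DERIV_chain2[OF f DERIV_minus[OF DERIV_ident]] by simp
  have "((\<lambda>x. if x \<ge> 0 then f x else f (- x)) has_real_derivative
        (if x \<ge> 0 then f' x else - f' (- x))) (at x)"
    by (rule DERIV_glue_at_0[OF f reflect]) (use assms in auto)
  moreover have "(\<lambda>x. if x \<ge> 0 then f x else f (- x)) = (\<lambda>x. f \<bar>x\<bar>)" by auto
  ultimately have "((\<lambda>x. f \<bar>x\<bar>) has_real_derivative (if x \<ge> 0 then f' x else - f' (- x))) (at x)"
    by simp
  then show ?thesis by (rule DERIV_cong) (use assms in \<open>auto simp: sgn_real_def\<close>)
qed

lemma DERIV_odd_extension:
  fixes f f' :: "real \<Rightarrow> real"
  assumes f: "\<And>x. (f has_real_derivative f' x) (at x)" and "f 0 = 0"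
  shows "((\<lambda>x. sgn x * f \<bar>x\<bar>) has_real_derivative f' \<bar>x\<bar>) (at x)"
proof -
  have reflect: "((\<lambda>x. - f (- x)) has_real_derivative f' (- x)) (at x)" for x
    using DERIV_minus[OF DERIV_chain2[OF f DERIV_minus[OF DERIV_ident]]] by simp
  have "((\<lambda>x. if x \<ge> 0 then f x else - f (- x)) has_real_derivative
        (if x \<ge> 0 then f' x else f' (- x))) (at x)"
    by (rule DERIV_glue_at_0[OF f reflect]) (use assms in auto)
  moreover have "(\<lambda>x. if x \<ge> 0 then f x else - f (- x)) = (\<lambda>x. sgn x * f \<bar>x\<bar>)"
    using assms by (auto simp: sgn_real_def)
  ultimately show ?thesis by (simp split: if_splits)
qed

(* The profile on [0,oo) of the n-th convolution power of e^{-|x|}, and its derivative. *)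
definition phi :: "nat \<Rightarrow> real \<Rightarrow> real" where
  "phi n t = exp (- t) * rbessel n t / fact n"

definition psi :: "nat \<Rightarrow> real \<Rightarrow> real" where
  "psi n t = - t * exp (- t) * rbessel n t / fact (Suc n)"

lemma phi_deriv: "(phi (Suc n) has_real_derivative psi n t) (at t)"
proof -
  have "((\<lambda>t. exp (- t) * rbessel (Suc n) t / fact (Suc n)) has_real_derivative
        (- exp (- t) * rbessel (Suc n) t + exp (- t) * (rbessel (Suc n) t - t * rbessel n t)) / fact (Suc n)) (at t)"
    by (auto intro!: derivative_eq_intros rbessel_deriv)
  then show ?thesis unfolding phi_def [abs_def] psi_def
    by (rule DERIV_cong) (simp add: algebra_simps)
qed

(* The second-order relation behind the convolution identity: psi_n' = phi_(n+1) - 2 phi_n. *)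
lemma psi_deriv: "(psi n has_real_derivative phi (Suc n) t - 2 * phi n t) (at t)"
proof (cases n)
  case 0
  have "((\<lambda>t. - t * exp (- t)) has_real_derivative t * exp (- t) - exp (- t)) (at t)"
    by (auto intro!: derivative_eq_intros)
  moreover have "psi 0 = (\<lambda>t. - t * exp (- t))" by (auto simp: psi_def)
  ultimately show ?thesis using 0 by (simp add: phi_def algebra_simps)
next
  case (Suc k)
  have "((\<lambda>t. - t * exp (- t) * rbessel n t / fact (Suc n)) has_real_derivative
        (t * exp (- t) * rbessel n t - exp (- t) * rbessel n t
         - t * exp (- t) * (rbessel n t - t * rbessel k t)) / fact (Suc n)) (at t)"
    unfolding Suc by (auto intro!: derivative_eq_intros rbessel_deriv simp del: fact_Suc)
      (simp add: field_simps del: fact_Suc)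
  moreover have "(t * exp (- t) * rbessel n t - exp (- t) * rbessel n t
         - t * exp (- t) * (rbessel n t - t * rbessel k t)) / fact (Suc n)
       = phi (Suc n) t - 2 * phi n t"
  proof -
    have "fact (Suc n) * phi (Suc n) t = exp (- t) * rbessel (Suc n) t"
      "fact (Suc n) * phi n t = (real n + 1) * (exp (- t) * rbessel n t)"
      by (simp_all add: phi_def del: fact_Suc) (simp add: field_simps)
    then have "fact (Suc n) * (phi (Suc n) t - 2 * phi n t) = exp (- t) * (t\<^sup>2 * rbessel k t - rbessel n t)"
      using Suc by (simp add: algebra_simps)
    moreover have "t * exp (- t) * rbessel n t - exp (- t) * rbessel n t
         - t * exp (- t) * (rbessel n t - t * rbessel k t) = exp (- t) * (t\<^sup>2 * rbessel k t - rbessel n t)"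
      by (simp add: algebra_simps power2_eq_square)
    ultimately show ?thesis by (metis fact_nonzero nonzero_mult_div_cancel_left)
  qed
  ultimately show ?thesis unfolding psi_def [abs_def] by simp
qed

lemma rbessel_isCont: "isCont (rbessel n) t"
proof (cases n)
  case 0
  have "rbessel 0 = (\<lambda>_. 1)" by auto
  then show ?thesis using 0 by simp
next
  case (Suc k)
  then show ?thesis using rbessel_deriv DERIV_isCont by blast
qed

lemma isCont_rbessel_comp [continuous_intros]: "isCont f x \<Longrightarrow> isCont (\<lambda>x. rbessel n (f x)) x"
  using rbessel_isCont isCont_o2 by blast

definition Phi :: "nat \<Rightarrow> real \<Rightarrow> real" where
  "Phi n x = phi n \<bar>x\<bar>"

definition dPhi :: "nat \<Rightarrow> real \<Rightarrow> real" where
  "dPhi n x = sgn x * psi n \<bar>x\<bar>"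

lemma Phi_deriv: "(Phi (Suc n) has_real_derivative dPhi n x) (at x)"
  unfolding Phi_def [abs_def] dPhi_def
  by (rule DERIV_even_extension[OF phi_deriv]) (simp add: psi_def)

lemma dPhi_deriv: "(dPhi n has_real_derivative Phi (Suc n) x - 2 * Phi n x) (at x)"
  unfolding Phi_def dPhi_def [abs_def]
  by (rule DERIV_odd_extension[OF psi_deriv]) (simp add: psi_def)

lemma Phi_isCont: "isCont (Phi n) x"
  unfolding Phi_def [abs_def] phi_def by (auto intro!: continuous_intros)

lemma Phi_measurable [measurable]: "Phi n \<in> borel_measurable borel"
  by (intro borel_measurable_continuous_onI continuous_at_imp_continuous_on ballI Phi_isCont)

lemma Phi_nonneg: "Phi n x \<ge> 0"
  unfolding Phi_def phi_def by (simp add: rbessel_nonneg)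

(* Functions dominated by a polynomial times e^{-|u|}; they are killed by e^{+-u}
   at the corresponding end of the line, which makes boundary terms vanish. *)
definition exp_decay :: "(real \<Rightarrow> real) \<Rightarrow> bool" where
  "exp_decay h \<longleftrightarrow> (\<exists>c N. \<forall>u. \<bar>h u\<bar> \<le> c * (1 + \<bar>u\<bar>) ^ N * exp (- \<bar>u\<bar>))"

lemma exp_decay_tendsto_at_top:
  assumes "exp_decay h"
  shows "((\<lambda>u. exp (y - u) * h u) \<longlongrightarrow> 0) at_top"
proof -
  obtain c N where bound: "\<And>u. \<bar>h u\<bar> \<le> c * (1 + \<bar>u\<bar>) ^ N * exp (- \<bar>u\<bar>)"
    using assms unfolding exp_decay_def by blast
  show ?thesis
  proof (rule Lim_null_comparison)
    show "\<forall>\<^sub>F u in at_top. norm (exp (y - u) * h u) \<le> c * exp (y + 1) * ((1 + u) ^ N / exp (1 + u)) * exp (- u)"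
      using eventually_ge_at_top[of 0]
    proof eventually_elim
      case (elim u)
      have "norm (exp (y - u) * h u) \<le> exp (y - u) * (c * (1 + u) ^ N * exp (- u))"
        using bound[of u] elim by (simp add: abs_mult)
      also have "\<dots> = c * exp (y + 1) * ((1 + u) ^ N / exp (1 + u)) * exp (- u)"
        by (simp add: exp_diff exp_add exp_minus field_simps)
      finally show ?case .
    qed
    have "((\<lambda>u::real. (1 + u) ^ N / exp (1 + u)) \<longlongrightarrow> 0) at_top"
      by (rule filterlim_compose[OF tendsto_power_div_exp_0 filterlim_tendsto_add_at_top[OF tendsto_const filterlim_ident]])
    moreover have "((\<lambda>u::real. exp (- u)) \<longlongrightarrow> 0) at_top"
      by (rule filterlim_compose[OF exp_at_bot filterlim_uminus_at_bot_at_top])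
    ultimately show "((\<lambda>u. c * exp (y + 1) * ((1 + u) ^ N / exp (1 + u)) * exp (- u)) \<longlongrightarrow> 0) at_top"
      using tendsto_mult[OF tendsto_mult[OF tendsto_const]] by fastforce
  qed
qed

lemma exp_decay_tendsto_at_bot:
  assumes "exp_decay h"
  shows "((\<lambda>u. exp (u - y) * h u) \<longlongrightarrow> 0) at_bot"
proof -
  have "exp_decay (\<lambda>u. h (- u))" using assms unfolding exp_decay_def by (metis abs_minus_cancel)
  then have "((\<lambda>u. exp (- y - u) * h (- u)) \<longlongrightarrow> 0) at_top" by (rule exp_decay_tendsto_at_top)
  moreover have "(\<lambda>u. exp (- y - u) * h (- u)) = (\<lambda>u. exp (- u - y) * h (- u))"
    by (rule ext) (simp add: algebra_simps)
  ultimately show ?thesis unfolding filterlim_at_bot_mirror by simp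
qed

lemma Phi_exp_decay: "exp_decay (Phi n)"
proof -
  have "\<bar>Phi n u\<bar> \<le> ((2 * real n + 1) ^ n / fact n) * (1 + \<bar>u\<bar>) ^ n * exp (- \<bar>u\<bar>)" for u
  proof -
    have "\<bar>Phi n u\<bar> = exp (- \<bar>u\<bar>) * rbessel n \<bar>u\<bar> / fact n"
      unfolding Phi_def phi_def using rbessel_nonneg[of "\<bar>u\<bar>" n] by simp
    also have "\<dots> \<le> exp (- \<bar>u\<bar>) * ((2 * real n + 1) ^ n * (1 + \<bar>u\<bar>) ^ n) / fact n"
      by (intro divide_right_mono mult_left_mono rbessel_poly_bound) auto
    finally show ?thesis by (simp add: algebra_simps)
  qed
  then show ?thesis unfolding exp_decay_def by blast
qed

lemma dPhi_exp_decay: "exp_decay (dPhi n)"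
proof -
  have "\<bar>dPhi n u\<bar> \<le> ((2 * real n + 1) ^ n / fact (Suc n)) * (1 + \<bar>u\<bar>) ^ Suc n * exp (- \<bar>u\<bar>)" for u
  proof -
    have "\<bar>dPhi n u\<bar> \<le> exp (- \<bar>u\<bar>) * (\<bar>u\<bar> * rbessel n \<bar>u\<bar>) / fact (Suc n)"
      unfolding dPhi_def psi_def using rbessel_nonneg[of "\<bar>u\<bar>" n]
      by (auto simp: abs_mult sgn_real_def mult_ac)
    also have "\<dots> \<le> exp (- \<bar>u\<bar>) * ((1 + \<bar>u\<bar>) * ((2 * real n + 1) ^ n * (1 + \<bar>u\<bar>) ^ n)) / fact (Suc n)"
      using rbessel_nonneg[of "\<bar>u\<bar>" n]
      by (intro divide_right_mono mult_left_mono mult_mono rbessel_poly_bound) auto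
    finally show ?thesis by (simp add: field_simps del: fact_Suc)
  qed
  then show ?thesis unfolding exp_decay_def by blast
qed

lemma FTC_Iio:
  fixes F f :: "real \<Rightarrow> real"
  assumes F: "\<And>x. (F has_real_derivative f x) (at x)" and f: "\<And>x. isCont f x"
    and nonneg: "\<And>x. f x \<ge> 0" and lim: "(F \<longlongrightarrow> 0) at_bot"
  shows "set_integrable lborel {..<y} f" and "(LBINT x:{..<y}. f x) = F y"
proof -
  have A: "((F \<circ> real_of_ereal) \<longlongrightarrow> 0) (at_right (- \<infinity>))"
    using lim by (simp add: ereal_tendsto_simps)
  have B: "((F \<circ> real_of_ereal) \<longlongrightarrow> F y) (at_left (ereal y))"
    using DERIV_isCont[OF F] by (simp add: ereal_tendsto_simps isCont_def filterlim_at_split)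
  note I = interval_integral_FTC_nonneg[where a = "- \<infinity>" and b = "ereal y", OF _ F f _ A B]
  show "set_integrable lborel {..<y} f" "(LBINT x:{..<y}. f x) = F y"
    using I nonneg by (simp_all add: einterval_eq_Iic interval_lebesgue_integral_def)
qed

lemma FTC_Ioi:
  fixes F f :: "real \<Rightarrow> real"
  assumes F: "\<And>x. (F has_real_derivative f x) (at x)" and f: "\<And>x. isCont f x"
    and nonneg: "\<And>x. f x \<ge> 0" and lim: "(F \<longlongrightarrow> 0) at_top"
  shows "set_integrable lborel {y<..} f" and "(LBINT x:{y<..}. f x) = - F y"
proof -
  have A: "((F \<circ> real_of_ereal) \<longlongrightarrow> F y) (at_right (ereal y))"
    using DERIV_isCont[OF F] by (simp add: ereal_tendsto_simps isCont_def filterlim_at_split)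
  have B: "((F \<circ> real_of_ereal) \<longlongrightarrow> 0) (at_left \<infinity>)"
    using lim by (simp add: ereal_tendsto_simps)
  note I = interval_integral_FTC_nonneg[where a = "ereal y" and b = "\<infinity>", OF _ F f _ A B]
  show "set_integrable lborel {y<..} f" "(LBINT x:{y<..}. f x) = - F y"
    using I nonneg by (simp_all add: einterval_eq_Ici interval_lebesgue_integral_def)
qed

lemma Phi_conv_exp:
  shows "integrable lborel (\<lambda>u. Phi n u * exp (- \<bar>y - u\<bar>))"
    and "(LINT u|lborel. Phi n u * exp (- \<bar>y - u\<bar>)) = Phi (Suc n) y"
proof -
  define F1 where "F1 u = exp (u - y) * (Phi (Suc n) u - dPhi n u) / 2" for u
  define F2 where "F2 u = - exp (y - u) * (Phi (Suc n) u + dPhi n u) / 2" for u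
  define f1 where "f1 u = Phi n u * exp (u - y)" for u
  define f2 where "f2 u = Phi n u * exp (y - u)" for u
  have d1: "(F1 has_real_derivative f1 u) (at u)" for u
  proof -
    have "(F1 has_real_derivative (exp (u - y) * (Phi (Suc n) u - dPhi n u)
          + exp (u - y) * (dPhi n u - (Phi (Suc n) u - 2 * Phi n u))) / 2) (at u)"
      unfolding F1_def [abs_def] by (auto intro!: derivative_eq_intros Phi_deriv dPhi_deriv)
    then show ?thesis by (rule DERIV_cong) (simp add: f1_def algebra_simps)
  qed
  have d2: "(F2 has_real_derivative f2 u) (at u)" for u
  proof -
    have "(F2 has_real_derivative (exp (y - u) * (Phi (Suc n) u + dPhi n u)
          - exp (y - u) * (dPhi n u + (Phi (Suc n) u - 2 * Phi n u))) / 2) (at u)"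
      unfolding F2_def [abs_def] by (auto intro!: derivative_eq_intros Phi_deriv dPhi_deriv)
        (simp add: field_simps)
    then show ?thesis by (rule DERIV_cong) (simp add: f2_def algebra_simps)
  qed
  have "(F1 \<longlongrightarrow> (0 - 0) / 2) at_bot"
    unfolding F1_def right_diff_distrib
    by (intro tendsto_divide tendsto_diff exp_decay_tendsto_at_bot Phi_exp_decay dPhi_exp_decay) auto
  then have I1: "set_integrable lborel {..<y} f1" "(LBINT u:{..<y}. f1 u) = F1 y"
    by (intro FTC_Iio[OF d1]; simp add: f1_def Phi_nonneg Phi_isCont)+
  have "(F2 \<longlongrightarrow> - (0 + 0) / 2) at_top"
    unfolding F2_def mult_minus_left distrib_left
    by (intro tendsto_divide tendsto_minus tendsto_add exp_decay_tendsto_at_top Phi_exp_decay dPhi_exp_decay) auto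
  then have I2: "set_integrable lborel {y<..} f2" "(LBINT u:{y<..}. f2 u) = - F2 y"
    by (intro FTC_Ioi[OF d2]; simp add: f2_def Phi_nonneg Phi_isCont)+
  have ae: "AE u in lborel. Phi n u * exp (- \<bar>y - u\<bar>) = indicator {..<y} u * f1 u + indicator {y<..} u * f2 u"
    using AE_lborel_singleton[of y] by eventually_elim (auto simp: f1_def f2_def indicator_def)
  have int1: "integrable lborel (\<lambda>u. indicator {..<y} u * f1 u)"
    and int2: "integrable lborel (\<lambda>u. indicator {y<..} u * f2 u)"
    using I1(1) I2(1) by (simp_all add: set_integrable_def)
  have meas: "(\<lambda>u. Phi n u * exp (- \<bar>y - u\<bar>)) \<in> borel_measurable lborel" by measurable
  show "integrable lborel (\<lambda>u. Phi n u * exp (- \<bar>y - u\<bar>))"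
    using integrable_cong_AE_imp[OF Bochner_Integration.integrable_add[OF int1 int2] meas] ae by (simp add: eq_commute)
  have "(LINT u|lborel. Phi n u * exp (- \<bar>y - u\<bar>))
        = (LINT u|lborel. indicator {..<y} u * f1 u + indicator {y<..} u * f2 u)"
    by (rule integral_cong_AE[OF meas _ ae]) (simp add: f1_def f2_def)
  also have "\<dots> = (LINT u|lborel. indicator {..<y} u * f1 u) + (LINT u|lborel. indicator {y<..} u * f2 u)"
    by (rule Bochner_Integration.integral_add[OF int1 int2])
  also have "\<dots> = F1 y - F2 y"
    using I1(2) I2(2) by (simp add: set_lebesgue_integral_def)
  also have "\<dots> = Phi (Suc n) y"
    by (simp add: F1_def F2_def field_simps)
  finally show "(LINT u|lborel. Phi n u * exp (- \<bar>y - u\<bar>)) = Phi (Suc n) y" .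
qed

lemma Phi_conv_exp_scaled:
  assumes a: "a > 0"
  shows "(LINT t|lborel. Phi n (a * t) * exp (- a * \<bar>x - t\<bar>)) = Phi (Suc n) (a * x) / a"
proof -
  have "(LINT u|lborel. Phi n u * exp (- \<bar>a * x - u\<bar>))
        = \<bar>a\<bar> *\<^sub>R (LINT t|lborel. Phi n (0 + a * t) * exp (- \<bar>a * x - (0 + a * t)\<bar>))"
    using a by (intro lborel_integral_real_affine) simp
  moreover have "\<bar>a * x - a * t\<bar> = a * \<bar>x - t\<bar>" for t
    using a by (simp add: abs_mult right_diff_distrib [symmetric])
  ultimately show ?thesis using Phi_conv_exp(2)[of n "a * x"] a by (simp add: field_simps)
qed

lemma conv_pow_closed_form:
  fixes C a :: real and g :: "real \<Rightarrow> real"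
  assumes a: "a > 0" and g: "\<And>x. g x = C * exp (- a * \<bar>x\<bar>)"
  shows "conv_pow g (Suc n) x = C ^ Suc n / (2 * pi * a) ^ n * Phi n (a * x)"
proof (induction n arbitrary: x)
  case 0
  show ?case using a by (simp add: g Phi_def phi_def abs_mult)
next
  case (Suc n)
  define K where "K = C ^ Suc n / (2 * pi * a) ^ n"
  have "conv_pow g (Suc (Suc n)) x = 1 / (2 * pi) * (LINT t|lborel. K * Phi n (a * t) * (C * exp (- a * \<bar>x - t\<bar>)))"
    by (simp add: nconv_def Suc K_def g)
  also have "\<dots> = K * C / (2 * pi) * (LINT t|lborel. Phi n (a * t) * exp (- a * \<bar>x - t\<bar>))"
    by (simp add: mult_ac)
  also have "\<dots> = K * C / (2 * pi) * (Phi (Suc n) (a * x) / a)"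
    by (simp only: Phi_conv_exp_scaled[OF a])
  also have "\<dots> = C ^ Suc (Suc n) / (2 * pi * a) ^ Suc n * Phi (Suc n) (a * x)"
    using a by (simp add: K_def field_simps)
  finally show ?case .
qed

definition besselK_kernel :: "real \<Rightarrow> real \<Rightarrow> real \<Rightarrow> real" where
  "besselK_kernel \<nu> x t = exp (- x * cosh t) * cosh (\<nu> * t)"

lemma besselK_kernel_measurable [measurable]: "besselK_kernel \<nu> x \<in> borel_measurable borel"
  unfolding besselK_kernel_def [abs_def]
  by (intro borel_measurable_continuous_onI continuous_intros)

lemma besselK_Ioi: "besselK \<nu> x = (LBINT t:{0<..}. besselK_kernel \<nu> x t)"
  unfolding besselK_def besselK_kernel_def
  by (rule set_integral_discrete_difference[where X = "{0}"]) auto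

lemma besselK_minus_order: "besselK (- \<nu>) x = besselK \<nu> x"
  by (simp add: besselK_def)

(* e^{-x cosh t} beats every exponential e^{c t}; this gives integrability of the kernel
   and the vanishing of boundary terms at infinity. *)
lemma exp_neg_cosh_bound:
  fixes x t c :: real
  assumes x: "x > 0" and t: "t \<ge> 0"
  shows "exp (- x * cosh t) * exp (c * t) \<le> exp ((c + 1)\<^sup>2 / x) * exp (- t)"
proof -
  have "t\<^sup>2 / 4 \<le> exp t / 2" using exp_lower_Taylor_quadratic[OF t] t by simp
  also have "\<dots> \<le> cosh t" by (simp add: cosh_def)
  finally have "x * (t\<^sup>2 / 4) \<le> x * cosh t" using x by simp
  moreover have "x * (t\<^sup>2 / 4) - (c + 1) * t + (c + 1)\<^sup>2 / x = (x / 4) * (t - 2 * (c + 1) / x)\<^sup>2"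
    using x by (simp add: power2_eq_square field_simps)
  moreover have "(x / 4) * (t - 2 * (c + 1) / x)\<^sup>2 \<ge> 0" using x by simp
  ultimately have "- x * cosh t + c * t \<le> (c + 1)\<^sup>2 / x + - t" by (simp add: algebra_simps)
  then show ?thesis by (simp add: exp_add [symmetric])
qed

lemma cosh_le_exp_abs: "cosh (x::real) \<le> exp \<bar>x\<bar>"
  unfolding cosh_def by (cases "x \<ge> 0") (auto simp: field_simps)

lemma abs_sinh_le_exp_abs: "\<bar>sinh (x::real)\<bar> \<le> exp \<bar>x\<bar>"
  unfolding sinh_def by (cases "x \<ge> 0") (auto simp: field_simps abs_le_iff)

lemma exp_neg_set_integrable: "set_integrable lborel {0<..} (\<lambda>t::real. exp (- t))"
proof (rule FTC_Ioi(1))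
  show "((\<lambda>t. - exp (- t)) has_real_derivative exp (- t)) (at t)" for t :: real
    by (auto intro!: derivative_eq_intros)
  show "((\<lambda>t. - exp (- t :: real)) \<longlongrightarrow> 0) at_top"
    using tendsto_minus[OF filterlim_compose[OF exp_at_bot filterlim_uminus_at_bot_at_top]] by simp
qed auto

lemma besselK_kernel_integrable:
  assumes x: "x > 0"
  shows "set_integrable lborel {0<..} (besselK_kernel \<nu> x)"
  unfolding set_integrable_def
proof (rule Bochner_Integration.integrable_bound)
  show "integrable lborel (\<lambda>t. exp ((\<bar>\<nu>\<bar> + 1)\<^sup>2 / x) * (indicator {0<..} t *\<^sub>R exp (- t)))"
    using exp_neg_set_integrable by (simp add: set_integrable_def)
  show "(\<lambda>t. indicator {0<..} t *\<^sub>R besselK_kernel \<nu> x t) \<in> borel_measurable lborel"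
    by measurable
  have "\<bar>besselK_kernel \<nu> x t\<bar> \<le> exp ((\<bar>\<nu>\<bar> + 1)\<^sup>2 / x) * exp (- t)" if "t \<ge> 0" for t
  proof -
    have "\<bar>besselK_kernel \<nu> x t\<bar> \<le> exp (- x * cosh t) * exp (\<bar>\<nu>\<bar> * t)"
      unfolding besselK_kernel_def using cosh_le_exp_abs[of "\<nu> * t"] that
      by (auto simp: abs_mult intro!: mult_left_mono)
    also have "\<dots> \<le> exp ((\<bar>\<nu>\<bar> + 1)\<^sup>2 / x) * exp (- t)" by (rule exp_neg_cosh_bound[OF x that])
    finally show ?thesis .
  qed
  then show "AE t in lborel. norm (indicator {0<..} t *\<^sub>R besselK_kernel \<nu> x t)
      \<le> norm (exp ((\<bar>\<nu>\<bar> + 1)\<^sup>2 / x) * (indicator {0<..} t *\<^sub>R exp (- t)))"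
    by (auto simp: indicator_def)
qed

lemma cosh_shifted_orders:
  fixes \<nu> t :: real
  shows "cosh ((\<nu> + 1) * t) = cosh ((\<nu> - 1) * t) + 2 * sinh t * sinh (\<nu> * t)"
proof -
  have "cosh ((\<nu> + 1) * t) = cosh (\<nu> * t + t)" "cosh ((\<nu> - 1) * t) = cosh (\<nu> * t - t)"
    by (simp_all add: algebra_simps)
  then show ?thesis by (simp add: cosh_add cosh_diff)
qed

(* Three-term recurrence, from integrating the derivative of e^{-x cosh t} sinh(nu t). *)
lemma besselK_recurrence:
  assumes x: "x > 0"
  shows "besselK (\<nu> + 1) x = besselK (\<nu> - 1) x + 2 * \<nu> / x * besselK \<nu> x"
proof -
  define F where "F t = exp (- x * cosh t) * sinh (\<nu> * t)" for t
  define f where "f t = - x / 2 * besselK_kernel (\<nu> + 1) x t + x / 2 * besselK_kernel (\<nu> - 1) x t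
      + \<nu> * besselK_kernel \<nu> x t" for t
  have deriv: "(F has_vector_derivative f t) (at t)" for t
  proof -
    have "(F has_real_derivative exp (- x * cosh t) * (- x * sinh t) * sinh (\<nu> * t)
          + exp (- x * cosh t) * (cosh (\<nu> * t) * \<nu>)) (at t)"
      unfolding F_def [abs_def] by (auto intro!: derivative_eq_intros)
    moreover have "exp (- x * cosh t) * (- x * sinh t) * sinh (\<nu> * t)
          + exp (- x * cosh t) * (cosh (\<nu> * t) * \<nu>) = f t"
      unfolding f_def besselK_kernel_def cosh_shifted_orders by (simp add: algebra_simps)
    ultimately show ?thesis by (simp add: has_real_derivative_iff_has_vector_derivative)
  qed
  have integrable: "set_integrable lborel {0<..} f"
    unfolding f_def by (intro set_integral_add set_integrable_mult_right besselK_kernel_integrable[OF x])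
  have at_0: "((F \<circ> real_of_ereal) \<longlongrightarrow> 0) (at_right 0)"
  proof -
    have "(F \<longlongrightarrow> F 0) (at_right 0)" unfolding F_def by (intro tendsto_intros)
    then show ?thesis unfolding zero_ereal_def ereal_tendsto_simps by (simp add: F_def)
  qed
  have at_top: "((F \<circ> real_of_ereal) \<longlongrightarrow> 0) (at_left \<infinity>)"
    unfolding ereal_tendsto_simps
  proof (rule Lim_null_comparison)
    show "\<forall>\<^sub>F t in at_top. norm (F t) \<le> exp ((\<bar>\<nu>\<bar> + 1)\<^sup>2 / x) * exp (- t)"
      using eventually_ge_at_top[of 0]
    proof eventually_elim
      case (elim t)
      have "norm (F t) \<le> exp (- x * cosh t) * exp (\<bar>\<nu>\<bar> * t)"
        unfolding F_def using abs_sinh_le_exp_abs[of "\<nu> * t"] elim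
        by (auto simp: abs_mult intro!: mult_left_mono)
      also have "\<dots> \<le> exp ((\<bar>\<nu>\<bar> + 1)\<^sup>2 / x) * exp (- t)" by (rule exp_neg_cosh_bound[OF x elim])
      finally show ?case .
    qed
    show "((\<lambda>t. exp ((\<bar>\<nu>\<bar> + 1)\<^sup>2 / x) * exp (- t)) \<longlongrightarrow> 0) at_top"
      using tendsto_mult_right_zero[OF filterlim_compose[OF exp_at_bot filterlim_uminus_at_bot_at_top]] by simp
  qed
  have cont: "isCont f t" for t
    unfolding f_def besselK_kernel_def by (auto intro!: continuous_intros)
  have integrable': "set_integrable lborel (einterval 0 \<infinity>) f"
    using integrable by (simp add: zero_ereal_def einterval_eq_Ici)
  have "(LBINT t=0..\<infinity>. f t) = 0 - 0"
    by (rule interval_integral_FTC_integrable[OF _ deriv cont integrable' at_0 at_top]) simp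
  then have "(LBINT t:{0<..}. f t) = 0" by (simp add: interval_lebesgue_integral_0_infty)
  then have "- x / 2 * besselK (\<nu> + 1) x + x / 2 * besselK (\<nu> - 1) x + \<nu> * besselK \<nu> x = 0"
    unfolding f_def besselK_Ioi
    by (simp add: set_integral_add set_integrable_mult_right besselK_kernel_integrable[OF x])
  then show ?thesis using x by (simp add: field_simps)
qed

(* K_(1/2), via the substitution s = sqrt(2x) sinh(t/2) in the Gaussian integral. *)
lemma besselK_half:
  assumes x: "x > 0"
  shows "besselK (1/2) x = sqrt pi / (exp x * sqrt (2 * x))"
proof -
  define g where "g t = sqrt (2 * x) * sinh (t / 2)" for t
  define g' where "g' t = sqrt (2 * x) * cosh (t / 2) / 2" for t
  define c where "c = exp x * sqrt (2 * x) / 2"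
  have subst: "exp (- (g t)\<^sup>2) * g' t = c * besselK_kernel (1/2) x t" for t
  proof -
    have "cosh t = 1 + 2 * (sinh (t / 2))\<^sup>2"
      using cosh_double[of "t / 2"] cosh_square_eq[of "t / 2"] by simp
    then have "exp (- x * cosh t) = exp (- x) * exp (- (g t)\<^sup>2)"
      using x by (simp add: g_def power_mult_distrib exp_add [symmetric] algebra_simps)
    then show ?thesis unfolding g'_def c_def besselK_kernel_def by (simp add: exp_minus field_simps)
  qed
  have g_0: "((ereal \<circ> g \<circ> real_of_ereal) \<longlongrightarrow> 0) (at_right 0)"
  proof -
    have "(g \<longlongrightarrow> g 0) (at_right 0)" unfolding g_def by (intro tendsto_intros) auto
    then show ?thesis unfolding zero_ereal_def ereal_tendsto_simps by (simp add: g_def o_def)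
  qed
  have g_top: "((ereal \<circ> g \<circ> real_of_ereal) \<longlongrightarrow> \<infinity>) (at_left \<infinity>)"
  proof -
    have "filterlim (\<lambda>t::real. t / 2) at_top at_top"
      using filterlim_tendsto_pos_mult_at_top[OF tendsto_const[of "1/2::real"] _ filterlim_ident] by simp
    then have "filterlim g at_top at_top"
      unfolding g_def using x
      by (intro filterlim_tendsto_pos_mult_at_top[OF tendsto_const] filterlim_compose[OF sinh_real_at_top]) auto
    then show ?thesis unfolding ereal_tendsto_simps by (simp add: o_def tendsto_PInfty_eq_at_top)
  qed
  have integrable: "set_integrable lborel (einterval 0 \<infinity>) (\<lambda>t. exp (- (g t)\<^sup>2) * g' t)"
    unfolding subst using besselK_kernel_integrable[OF x] by (simp add: zero_ereal_def einterval_eq_Ici)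
  have "(LBINT s=0..\<infinity>. exp (- s\<^sup>2)) = (LBINT t=0..\<infinity>. exp (- (g t)\<^sup>2) * g' t)"
    by (rule interval_integral_substitution_nonneg(2)[OF _ _ _ _ _ _ g_0 g_top integrable])
      (use x in \<open>auto simp: g_def g'_def intro!: derivative_eq_intros continuous_intros less_imp_le[OF cosh_real_pos]\<close>)
  also have "\<dots> = c * besselK (1/2) x"
    by (simp add: subst interval_lebesgue_integral_0_infty besselK_Ioi)
  finally have "c * besselK (1/2) x = (LBINT s:{0<..}. exp (- s\<^sup>2))"
    by (simp add: interval_lebesgue_integral_0_infty)
  also have "\<dots> = (LBINT s:{0..}. exp (- s\<^sup>2))"
    by (rule set_integral_discrete_difference[where X = "{0}"]) auto
  also have "\<dots> = sqrt pi / 2"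
    using gaussian_moment_0 unfolding set_lebesgue_integral_def by (rule has_bochner_integral_integral_eq)
  finally show ?thesis using x by (simp add: c_def field_simps)
qed

lemma besselK_half_integer:
  assumes x: "x > 0"
  shows "besselK (real n + 1/2) x = sqrt pi / (exp x * sqrt (2 * x)) * rbessel n x / x ^ n"
proof -
  define S where "S = sqrt pi / (exp x * sqrt (2 * x))"
  have "besselK (real n + 1/2) x = S * rbessel n x / x ^ n \<and>
        besselK (real (Suc n) + 1/2) x = S * rbessel (Suc n) x / x ^ Suc n"
  proof (induction n)
    case 0
    have half: "besselK (1/2) x = S" using besselK_half[OF x] by (simp add: S_def)
    have "besselK (1/2 + 1) x = besselK (1/2 - 1) x + 2 * (1/2) / x * besselK (1/2) x"
      by (rule besselK_recurrence[OF x])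
    also have "besselK (1/2 - 1) x = besselK (1/2) x"
      using besselK_minus_order[of "1/2" x] by simp
    finally have "besselK (3/2) x = S + S / x" using half by simp
    then show ?case using half x by (simp add: field_simps)
  next
    case (Suc n)
    let ?\<nu> = "real (Suc n) + 1/2"
    have "besselK (?\<nu> + 1) x = besselK (?\<nu> - 1) x + 2 * ?\<nu> / x * besselK ?\<nu> x"
      by (rule besselK_recurrence[OF x])
    also have "?\<nu> - 1 = real n + 1/2" by simp
    also have "2 * ?\<nu> = 2 * real n + 3" by simp
    finally have "besselK (real (Suc (Suc n)) + 1/2) x
        = S * rbessel n x / x ^ n + (2 * real n + 3) / x * (S * rbessel (Suc n) x / x ^ Suc n)"
      using Suc.IH by (simp add: add.assoc)
    also have "\<dots> = S * rbessel (Suc (Suc n)) x / x ^ Suc (Suc n)"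
      using x by (simp add: field_simps power2_eq_square)
    finally show ?case using Suc.IH by blast
  qed
  then show ?thesis by (simp add: S_def)
qed

lemma powr_half_integer: "(b::real) \<ge> 0 \<Longrightarrow> b powr (real n + 1/2) = b ^ n * sqrt b"
  by (cases "b = 0") (auto simp: powr_add powr_realpow powr_half_sqrt)

lemma conv_pow_explicit:
  fixes C a :: real and g :: "real \<Rightarrow> real"
  assumes a: "a > 0" and g: "\<And>x. g x = C * exp (- a * \<bar>x\<bar>)"
  shows "conv_pow g (Suc n) x = C ^ Suc n / (2 * pi * a) ^ n * (exp (- (a * \<bar>x\<bar>)) * rbessel n (a * \<bar>x\<bar>) / fact n)"
  using conv_pow_closed_form[OF a g] a by (simp add: Phi_def phi_def abs_mult)

lemma conv_pow_besselK:
  fixes C a :: real and g :: "real \<Rightarrow> real"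
  assumes C: "C \<ge> 0" and a: "a > 0" and g: "\<And>x. g x = C * exp (- a * \<bar>x\<bar>)" and xi: "xi \<noteq> 0"
  shows "conv_pow g (Suc n) xi = 2 * sqrt (a * C) * (C * \<bar>xi\<bar> / (2 * pi)) powr (real (Suc n) - 1/2)
           * besselK (real (Suc n) - 1/2) (a * \<bar>xi\<bar>) / Gamma (real (Suc n))"
proof -
  define y where "y = a * \<bar>xi\<bar>"
  define b where "b = C * \<bar>xi\<bar> / (2 * pi)"
  have y: "y > 0" using a xi by (simp add: y_def)
  have b: "b \<ge> 0" using C by (simp add: b_def)
  have order: "real (Suc n) - 1/2 = real n + 1/2" by simp
  have gamma: "Gamma (real (Suc n)) = fact n" using Gamma_fact[of n] by (simp add: add.commute)
  have sqrt_prod: "sqrt (a * C) * sqrt b * sqrt pi = C / 2 * sqrt (2 * y)"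
  proof -
    have "sqrt (a * C) * sqrt b * sqrt pi = sqrt (a * C * b * pi)" by (simp add: real_sqrt_mult)
    also have "a * C * b * pi = (C / 2)\<^sup>2 * (2 * y)" by (simp add: b_def y_def power2_eq_square field_simps)
    also have "sqrt \<dots> = C / 2 * sqrt (2 * y)" using C by (simp add: real_sqrt_mult)
    finally show ?thesis .
  qed
  have ratio: "b ^ n / y ^ n = C ^ n / (2 * pi * a) ^ n"
    using a xi by (simp add: b_def y_def power_divide [symmetric] field_simps)
  have "2 * sqrt (a * C) * (b ^ n * sqrt b) * (sqrt pi / (exp y * sqrt (2 * y)) * rbessel n y / y ^ n) / fact n
      = 2 * (sqrt (a * C) * sqrt b * sqrt pi) / sqrt (2 * y) * (b ^ n / y ^ n) * (exp (- y) * rbessel n y / fact n)"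
    by (simp add: exp_minus field_simps)
  also have "\<dots> = C ^ Suc n / (2 * pi * a) ^ n * (exp (- y) * rbessel n y / fact n)"
    unfolding sqrt_prod ratio using y by (simp add: field_simps)
  finally show ?thesis
    unfolding order gamma b_def [symmetric] y_def [symmetric] powr_half_integer[OF b]
      besselK_half_integer[OF y] conv_pow_explicit[OF a g] by (simp add: y_def)
qed

lemma conv_pow_Gamma_bound:
  fixes C a :: real and g :: "real \<Rightarrow> real"
  assumes C: "C \<ge> 0" and a: "a > 0" and g: "\<And>x. g x = C * exp (- a * \<bar>x\<bar>)"
  shows "conv_pow g (Suc n) xi \<le> C * exp (- a * \<bar>xi\<bar>) * (C / (pi * a)) ^ (Suc n - 1)
           * Gamma ((1 + a * \<bar>xi\<bar>) / 2 + real (Suc n) - 1)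
           / (Gamma (real (Suc n)) * Gamma ((1 + a * \<bar>xi\<bar>) / 2))"
proof -
  define y where "y = a * \<bar>xi\<bar>"
  define s where "s = (1 + y) / 2"
  define K where "K = C * exp (- y) * (C / (pi * a)) ^ n / fact n"
  have y: "y \<ge> 0" using a by (simp add: y_def)
  have s: "s > 0" using y by (simp add: s_def)
  then have "s \<notin> \<int>\<^sub>\<le>\<^sub>0" using nonpos_Ints_nonpos by fastforce
  then have poch: "pochhammer s n = Gamma (s + real n) / Gamma s"
    by (rule pochhammer_Gamma)
  have gamma: "Gamma (real (Suc n)) = fact n" using Gamma_fact[of n] by (simp add: add.commute)
  have "conv_pow g (Suc n) xi = K * (rbessel n y / 2 ^ n)"
    unfolding conv_pow_explicit[OF a g] K_def y_def
    by (simp add: power_mult_distrib power_divide field_simps)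
  also have "\<dots> \<le> K * pochhammer s n"
    using rbessel_le_pochhammer[OF y, of n] C a
    by (intro mult_left_mono) (simp_all add: K_def s_def field_simps)
  also have "\<dots> = C * exp (- a * \<bar>xi\<bar>) * (C / (pi * a)) ^ (Suc n - 1)
           * Gamma ((1 + a * \<bar>xi\<bar>) / 2 + real (Suc n) - 1)
           / (Gamma (real (Suc n)) * Gamma ((1 + a * \<bar>xi\<bar>) / 2))"
    unfolding poch gamma K_def using Gamma_real_pos[OF s] by (simp add: s_def y_def)
  finally show ?thesis .
qed

theorem mainTheorem7:
  fixes C a :: real and g :: "real \<Rightarrow> real"
  assumes "C \<ge> 0" and "a > 0"
    and "\<And>xi. g xi = C * exp (- a * \<bar>xi\<bar>)"
  shows "(\<forall>m::nat. m \<ge> 1 \<longrightarrow> (\<forall>xi::real. xi \<noteq> 0 \<longrightarrow>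
           conv_pow g m xi = 2 * sqrt (a * C) * (C * \<bar>xi\<bar> / (2 * pi)) powr (real m - 1/2)
              * besselK (real m - 1/2) (a * \<bar>xi\<bar>) / Gamma (real m)))
       \<and> (\<forall>m::nat. m \<ge> 1 \<longrightarrow> (\<forall>xi::real.
           conv_pow g m xi \<le> C * exp (- a * \<bar>xi\<bar>) * (C / (pi * a)) ^ (m - 1)
              * Gamma ((1 + a * \<bar>xi\<bar>) / 2 + real m - 1)
              / (Gamma (real m) * Gamma ((1 + a * \<bar>xi\<bar>) / 2))))"
proof (intro conjI allI impI)
  fix m :: nat and xi :: real
  assume "m \<ge> 1"
  then obtain n where m: "m = Suc n" by (cases m) auto
  show "conv_pow g m xi \<le> C * exp (- a * \<bar>xi\<bar>) * (C / (pi * a)) ^ (m - 1)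
          * Gamma ((1 + a * \<bar>xi\<bar>) / 2 + real m - 1) / (Gamma (real m) * Gamma ((1 + a * \<bar>xi\<bar>) / 2))"
    unfolding m by (rule conv_pow_Gamma_bound[OF assms])
  assume "xi \<noteq> 0"
  then show "conv_pow g m xi = 2 * sqrt (a * C) * (C * \<bar>xi\<bar> / (2 * pi)) powr (real m - 1/2)
          * besselK (real m - 1/2) (a * \<bar>xi\<bar>) / Gamma (real m)"
    unfolding m by (rule conv_pow_besselK[OF assms])
qed

end
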